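(* Let $G$ and $H$ be connected graphs, each with at least $2$ vertices, neither of which contains a pair of true twins. Then the strong product $G\boxtimes H$ is $1$-perfectly orientable if and only if one of $G$, $H$ is isomorphic to $P_3$ and the other is isomorphic to $R_n$ for some $n\ge 1$ or to $R_n\ast K_1$ for some $n\ge 0$.
   Context: All graphs are finite and simple. An orientation of a graph $G$ is $1$-perfect if the out-neighborhood of every vertex induces a clique in $G$; $G$ is $1$-perfectly orientable if it admits a $1$-perfect orientation. Two distinct vertices $u,v$ are true twins if $N[u]=N[v]$ (closed neighborhoods). The strong product $G\boxtimes H$ has vertex set $V(G)\times V(H)$, with distinct $(u,v),(u',v')$ adjacent iff $u'\in N_G[u]$ and $v'\in N_H[v]$. $P_3$ is the path on $3$ vertices. For an integer $n\ge 0$, the raft $R_n$ is the graph with vertex set $X\cup Y$, where $X=\{x_0,\dots,x_n\}$ and $Y=\{y_0,\dots,y_n\}$ are disjoint cliques, and, for $0\le i,j\le n$, $x_i$ is adjacent to $y_j$ iff $i+j\ge n+1$ (no other edges). $R_n\ast K_1$ is $R_n$ with an added vertex adjacent to all vertices of $R_n$. *)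

theory Defs
  imports Main
begin

definition graph :: "'a set \<Rightarrow> ('a \<Rightarrow> 'a \<Rightarrow> bool) \<Rightarrow> bool" where
  "graph V E \<longleftrightarrow> finite V \<and> (\<forall>u v. E u v \<longrightarrow> u \<in> V \<and> v \<in> V)
     \<and> (\<forall>u v. E u v \<longrightarrow> E v u) \<and> (\<forall>v. \<not> E v v)"

definition connected_graph :: "'a set \<Rightarrow> ('a \<Rightarrow> 'a \<Rightarrow> bool) \<Rightarrow> bool" where
  "connected_graph V E \<longleftrightarrow> V \<noteq> {} \<and> (\<forall>u\<in>V. \<forall>v\<in>V. E\<^sup>*\<^sup>* u v)"

definition closed_nbhd :: "'a set \<Rightarrow> ('a \<Rightarrow> 'a \<Rightarrow> bool) \<Rightarrow> 'a \<Rightarrow> 'a set" where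
  "closed_nbhd V E u = {w \<in> V. w = u \<or> E u w}"

definition has_true_twins :: "'a set \<Rightarrow> ('a \<Rightarrow> 'a \<Rightarrow> bool) \<Rightarrow> bool" where
  "has_true_twins V E \<longleftrightarrow>
     (\<exists>u\<in>V. \<exists>v\<in>V. u \<noteq> v \<and> closed_nbhd V E u = closed_nbhd V E v)"

definition orientation :: "('a \<Rightarrow> 'a \<Rightarrow> bool) \<Rightarrow> ('a \<Rightarrow> 'a \<Rightarrow> bool) \<Rightarrow> bool" where
  "orientation E D \<longleftrightarrow> (\<forall>u v. E u v \<longrightarrow> D u v \<or> D v u)
     \<and> (\<forall>u v. D u v \<longrightarrow> E u v \<and> \<not> D v u)"

definition one_perfect_orientation ::
  "('a \<Rightarrow> 'a \<Rightarrow> bool) \<Rightarrow> ('a \<Rightarrow> 'a \<Rightarrow> bool) \<Rightarrow> bool" where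
  "one_perfect_orientation E D \<longleftrightarrow> orientation E D
     \<and> (\<forall>v x y. D v x \<and> D v y \<and> x \<noteq> y \<longrightarrow> E x y)"

definition one_perfectly_orientable :: "('a \<Rightarrow> 'a \<Rightarrow> bool) \<Rightarrow> bool" where
  "one_perfectly_orientable E \<longleftrightarrow> (\<exists>D. one_perfect_orientation E D)"

definition strong_prod_E :: "'a set \<Rightarrow> ('a \<Rightarrow> 'a \<Rightarrow> bool) \<Rightarrow> 'b set \<Rightarrow> ('b \<Rightarrow> 'b \<Rightarrow> bool)
    \<Rightarrow> ('a \<times> 'b) \<Rightarrow> ('a \<times> 'b) \<Rightarrow> bool" where
  "strong_prod_E VG EG VH EH p q \<longleftrightarrow>
     p \<in> VG \<times> VH \<and> q \<in> VG \<times> VH \<and> p \<noteq> q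
     \<and> (fst p = fst q \<or> EG (fst p) (fst q)) \<and> (snd p = snd q \<or> EH (snd p) (snd q))"

definition graph_iso :: "'a set \<Rightarrow> ('a \<Rightarrow> 'a \<Rightarrow> bool) \<Rightarrow> 'b set \<Rightarrow> ('b \<Rightarrow> 'b \<Rightarrow> bool) \<Rightarrow> bool" where
  "graph_iso V1 E1 V2 E2 \<longleftrightarrow>
     (\<exists>f. bij_betw f V1 V2 \<and> (\<forall>u\<in>V1. \<forall>v\<in>V1. E1 u v \<longleftrightarrow> E2 (f u) (f v)))"

definition P3_V :: "nat set" where "P3_V = {0, 1, 2}"
definition P3_E :: "nat \<Rightarrow> nat \<Rightarrow> bool" where
  "P3_E u v \<longleftrightarrow> {u, v} = {0, 1} \<or> {u, v} = {1, 2}"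

text \<open>The raft R_n: (False, i) is x_i, (True, j) is y_j, for 0 \<le> i, j \<le> n.\<close>
definition raft_V :: "nat \<Rightarrow> (bool \<times> nat) set" where
  "raft_V n = UNIV \<times> {0..n}"

definition raft_E :: "nat \<Rightarrow> (bool \<times> nat) \<Rightarrow> (bool \<times> nat) \<Rightarrow> bool" where
  "raft_E n p q \<longleftrightarrow> p \<in> raft_V n \<and> q \<in> raft_V n \<and> p \<noteq> q \<and>
     (fst p = fst q \<or> snd p + snd q \<ge> n + 1)"

text \<open>R_n * K_1: the extra universal vertex is None.\<close>
definition raftK1_V :: "nat \<Rightarrow> (bool \<times> nat) option set" where
  "raftK1_V n = insert None (Some ` raft_V n)"

definition raftK1_E :: "nat \<Rightarrow> (bool \<times> nat) option \<Rightarrow> (bool \<times> nat) option \<Rightarrow> bool" where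
  "raftK1_E n p q \<longleftrightarrow> p \<in> raftK1_V n \<and> q \<in> raftK1_V n \<and> p \<noteq> q \<and>
     (p = None \<or> q = None \<or> raft_E n (the p) (the q))"

end

theory Submission
  imports Defs
begin

text \<open>For the sufficiency, \<open>R n\<close> and \<open>R n * K1\<close> are two cliques \<open>X\<close>, \<open>Y\<close> whose cross edges
  are given by a threshold \<open>r x + r y \<ge> N\<close>; in \<open>P3 \<boxtimes> G\<close> every vertex can then be pointed
  upwards in the threshold order, and the resulting out-neighbourhoods are cliques.

  For the necessity, a connected twin-free graph with at least two vertices contains an induced
  \<open>P3\<close>, and \<open>P3 \<boxtimes> F\<close> admits no 1-perfect orientation for \<open>F\<close> a claw, \<open>C4\<close>, bull, \<open>P5\<close>
  or \<open>C5\<close>. So both factors are free of these five graphs. Such a connected graph has no three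
  pairwise non-adjacent vertices; taking the non-neighbours of a vertex of maximum non-degree as
  \<open>Y\<close> splits it into two cliques, and \<open>C4\<close>-freeness makes the neighbourhoods of \<open>X\<close> in \<open>Y\<close>
  nested. Ranking by these neighbourhoods identifies a twin-free such graph as a raft. Finally,
  \<open>P4 \<boxtimes> P4\<close> is not 1-perfectly orientable, while every raft other than \<open>P3 = R 0 * K1\<close>
  contains an induced \<open>P4\<close>; hence one factor is \<open>P3\<close>.\<close>

section \<open>One-perfect orientations\<close>

lemma one_perfectly_orientable_induced_subgraph:
  assumes O: "one_perfect_orientation E' D'" and inj: "inj_on \<phi> V"
    and dom: "\<And>p q. E p q \<Longrightarrow> p \<in> V \<and> q \<in> V"
    and adj: "\<And>p q. p \<in> V \<Longrightarrow> q \<in> V \<Longrightarrow> E p q \<longleftrightarrow> E' (\<phi> p) (\<phi> q)"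
  shows "one_perfectly_orientable E"
proof -
  define D where "D p q \<longleftrightarrow> E p q \<and> D' (\<phi> p) (\<phi> q)" for p q
  have "orientation E D"
    using O dom adj unfolding orientation_def one_perfect_orientation_def D_def by metis
  moreover have "E x y" if "D v x" "D v y" "x \<noteq> y" for v x y
  proof -
    have "x \<in> V" "y \<in> V" using that dom unfolding D_def by blast+
    moreover have "\<phi> x \<noteq> \<phi> y" using calculation that(3) inj by (auto dest: inj_onD)
    ultimately show ?thesis
      using that adj O unfolding D_def one_perfect_orientation_def by blast
  qed
  ultimately show ?thesis
    unfolding one_perfectly_orientable_def one_perfect_orientation_def by blast
qed

lemma one_perfectly_orientable_strong_prod_swap:
  assumes "one_perfectly_orientable (strong_prod_E VH EH VG EG)"
  shows "one_perfectly_orientable (strong_prod_E VG EG VH EH)"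
proof -
  obtain D where "one_perfect_orientation (strong_prod_E VH EH VG EG) D"
    using assms unfolding one_perfectly_orientable_def by blast
  then show ?thesis
    by (rule one_perfectly_orientable_induced_subgraph[of _ _ "\<lambda>(a, b). (b, a)" "VG \<times> VH"])
       (auto simp: inj_on_def strong_prod_E_def)
qed

lemma one_perfectly_orientable_strong_prod_iso:
  assumes "one_perfectly_orientable (strong_prod_E VG' EG' VH' EH')"
    and "graph_iso VG EG VG' EG'" and "graph_iso VH EH VH' EH'"
  shows "one_perfectly_orientable (strong_prod_E VG EG VH EH)"
proof -
  obtain D where O: "one_perfect_orientation (strong_prod_E VG' EG' VH' EH') D"
    using assms(1) unfolding one_perfectly_orientable_def by blast
  obtain f where f: "bij_betw f VG VG'" "\<And>u v. u \<in> VG \<Longrightarrow> v \<in> VG \<Longrightarrow> EG u v \<longleftrightarrow> EG' (f u) (f v)"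
    using assms(2) unfolding graph_iso_def by blast
  obtain h where h: "bij_betw h VH VH'" "\<And>u v. u \<in> VH \<Longrightarrow> v \<in> VH \<Longrightarrow> EH u v \<longleftrightarrow> EH' (h u) (h v)"
    using assms(3) unfolding graph_iso_def by blast
  have inj: "inj_on f VG" "inj_on h VH" and img: "f ` VG = VG'" "h ` VH = VH'"
    using f(1) h(1) by (auto simp: bij_betw_def)
  show ?thesis
  proof (rule one_perfectly_orientable_induced_subgraph[OF O, of "map_prod f h" "VG \<times> VH"])
    show "inj_on (map_prod f h) (VG \<times> VH)"
      using inj by (rule map_prod_inj_on)
  next
    fix p q assume "p \<in> VG \<times> VH" "q \<in> VG \<times> VH"
    moreover have "map_prod f h p = map_prod f h q \<longleftrightarrow> p = q"
      using calculation inj by (auto simp: map_prod_def split: prod.splits dest: inj_onD)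
    ultimately show "strong_prod_E VG EG VH EH p q
        \<longleftrightarrow> strong_prod_E VG' EG' VH' EH' (map_prod f h p) (map_prod f h q)"
      using f(2) h(2) img inj unfolding strong_prod_E_def
      by (auto simp: map_prod_def split: prod.splits dest: inj_onD)
  qed (auto simp: strong_prod_E_def)
qed

lemma one_perfectly_orientable_by_covers:
  assumes sym: "\<And>u v. E u v \<Longrightarrow> E v u" and irrefl: "\<And>u. \<not> E u u"
    and covers: "\<And>u v. E u v \<Longrightarrow> v \<in> C u \<or> u \<in> C v"
    and clique: "\<And>u x y. x \<in> C u \<Longrightarrow> y \<in> C u \<Longrightarrow> E u x \<Longrightarrow> E u y \<Longrightarrow> x \<noteq> y \<Longrightarrow> E x y"
  shows "one_perfectly_orientable E"
proof -
  obtain r :: "'a rel" where r: "Well_order r" "Field r = UNIV"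
    using well_ordering[where 'a='a] by blast
  then have total: "u \<noteq> v \<Longrightarrow> (u, v) \<in> r \<or> (v, u) \<in> r" and anti: "antisym r" for u v
    by (simp_all add: well_order_on_def linear_order_on_def partial_order_on_def total_on_def)
  \<comment> \<open>an edge covered from both ends is oriented along the well-order\<close>
  define D where "D u v \<longleftrightarrow> E u v \<and> v \<in> C u \<and> (u \<in> C v \<longrightarrow> (u, v) \<in> r)" for u v
  have "orientation E D"
    unfolding orientation_def D_def using sym irrefl covers total anti
    by (metis antisymD)
  moreover have "E x y" if "D v x" "D v y" "x \<noteq> y" for v x y
    using that clique unfolding D_def by blast
  ultimately show ?thesis
    unfolding one_perfectly_orientable_def one_perfect_orientation_def by blast
qed

section \<open>Strong products of \<open>P3\<close> with rafts\<close>

lemma P3_E_iff: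
  "P3_E a b \<longleftrightarrow> (a = 0 \<and> b = 1) \<or> (a = 1 \<and> b = 0) \<or> (a = 1 \<and> b = 2) \<or> (a = 2 \<and> b = 1)"
  unfolding P3_E_def by (auto simp: doubleton_eq_iff)

locale cobipartite_threshold =
  fixes V :: "'b set" and E :: "'b \<Rightarrow> 'b \<Rightarrow> bool" and X Y :: "'b set"
    and r :: "'b \<Rightarrow> nat" and N :: nat
  assumes graph: "graph V E" and partition: "V = X \<union> Y" "X \<inter> Y = {}"
    and clique_X: "\<And>x x'. x \<in> X \<Longrightarrow> x' \<in> X \<Longrightarrow> x \<noteq> x' \<Longrightarrow> E x x'"
    and clique_Y: "\<And>y y'. y \<in> Y \<Longrightarrow> y' \<in> Y \<Longrightarrow> y \<noteq> y' \<Longrightarrow> E y y'"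
    and cross_adj: "\<And>x y. x \<in> X \<Longrightarrow> y \<in> Y \<Longrightarrow> E x y \<longleftrightarrow> N \<le> r x + r y"
begin

lemma adj_iff:
  assumes "v \<in> V" "w \<in> V" "v \<noteq> w"
  shows "E v w \<longleftrightarrow> (v \<in> X \<longleftrightarrow> w \<in> X) \<or> N \<le> r v + r w"
  using assms partition clique_X clique_Y cross_adj[of v w] cross_adj[of w v] graph
  unfolding graph_def by (auto simp: add.commute)

definition up :: "'b \<Rightarrow> 'b set" where
  "up v = {w \<in> V. ((w \<in> X \<longleftrightarrow> v \<in> X) \<and> r v \<le> r w) \<or> ((w \<in> X \<longleftrightarrow> v \<notin> X) \<and> N \<le> r v + r w)}"

text \<open>A vertex \<open>(c, v)\<close> of \<open>P3 \<boxtimes> G\<close> points into the columns \<open>cover_P3 c v\<close> and, within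
  \<open>G\<close>, upwards in the threshold order; the exceptions are that in column \<open>0\<close> a vertex of \<open>Y\<close>,
  and in column \<open>2\<close> a vertex of \<open>X\<close>, points to its whole clique.\<close>

definition cover_P3 :: "nat \<Rightarrow> 'b \<Rightarrow> nat set" where
  "cover_P3 c v = (if c = 0 then {0, 1} else if c = 2 then {1, 2}
     else if v \<in> X then {0, 1} else {1, 2})"

definition cover_G :: "nat \<Rightarrow> 'b \<Rightarrow> 'b set" where
  "cover_G c v = (if c = 0 then (if v \<in> X then up v else Y)
     else if c = 1 then up v else (if v \<in> Y then up v else X))"

definition cover :: "nat \<times> 'b \<Rightarrow> (nat \<times> 'b) set" where
  "cover p = cover_P3 (fst p) (snd p) \<times> cover_G (fst p) (snd p)"

lemma cover_covers_edges:
  assumes "strong_prod_E P3_V P3_E V E (c, a) (c', b)"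
  shows "(c', b) \<in> cover (c, a) \<or> (c, a) \<in> cover (c', b)"
proof -
  have V: "a \<in> V" "b \<in> V" and c: "c \<in> {0, 1, 2}" "c' \<in> {0, 1, 2}"
    and adj: "a = b \<or> E a b" and cc: "c = c' \<or> P3_E c c'" and ne: "(c, a) \<noteq> (c', b)"
    using assms unfolding strong_prod_E_def P3_V_def by auto
  have side: "a \<in> Y \<longleftrightarrow> a \<notin> X" "b \<in> Y \<longleftrightarrow> b \<notin> X" using V partition by auto
  have up_self: "a \<in> up a" using V unfolding up_def by auto
  have up_G: "b \<in> up a \<or> a \<in> up b" and up_cross: "(a \<in> X) \<noteq> (b \<in> X) \<Longrightarrow> b \<in> up a \<and> a \<in> up b"
    if "a \<noteq> b" using adj that adj_iff[OF V that] V unfolding up_def by (auto simp: add.commute)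
  show ?thesis
  proof (cases "a = b")
    case True
    then have "P3_E c c'" using cc ne by auto
    then show ?thesis using True up_self side unfolding cover_def cover_P3_def cover_G_def P3_E_iff by auto
  next
    case False
    then show ?thesis using up_G[OF False] up_cross[OF False] cc c side
      unfolding cover_def cover_P3_def cover_G_def P3_E_iff by auto
  qed
qed

lemma cover_clique:
  assumes "x \<in> cover u" "y \<in> cover u" "strong_prod_E P3_V P3_E V E u x"
    "strong_prod_E P3_V P3_E V E u y" "x \<noteq> y"
  shows "strong_prod_E P3_V P3_E V E x y"
proof -
  obtain c v c1 w1 c2 w2 where uxy: "u = (c, v)" "x = (c1, w1)" "y = (c2, w2)"
    by (metis surj_pair)
  have V: "w1 \<in> V" "w2 \<in> V" "c1 \<in> P3_V" "c2 \<in> P3_V"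
    using assms unfolding uxy strong_prod_E_def by auto
  have "c1 = c2 \<or> P3_E c1 c2"
    using assms(1,2) unfolding uxy cover_def cover_P3_def P3_E_iff by (auto split: if_splits)
  moreover have "(w1 \<in> X \<longleftrightarrow> w2 \<in> X) \<or> N \<le> r w1 + r w2"
    using assms(1,2) partition unfolding uxy cover_def cover_G_def up_def by (auto split: if_splits)
  then have "w1 = w2 \<or> E w1 w2" using adj_iff V by blast
  ultimately show ?thesis using V assms(5) unfolding uxy strong_prod_E_def by auto
qed

lemma one_perfectly_orientable_P3_strong_prod:
  "one_perfectly_orientable (strong_prod_E P3_V P3_E V E)"
proof (rule one_perfectly_orientable_by_covers[where C = cover])
  fix u v assume "strong_prod_E P3_V P3_E V E u v"
  then show "v \<in> cover u \<or> u \<in> cover v"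
    using cover_covers_edges by (metis surj_pair)
next
  fix u x y assume "x \<in> cover u" "y \<in> cover u" "strong_prod_E P3_V P3_E V E u x"
    "strong_prod_E P3_V P3_E V E u y" "x \<noteq> y"
  then show "strong_prod_E P3_V P3_E V E x y" by (rule cover_clique)
qed (use graph in \<open>auto simp: strong_prod_E_def P3_E_iff graph_def\<close>)

end

lemma graph_raft: "graph (raft_V n) (raft_E n)"
  unfolding graph_def raft_E_def raft_V_def by auto

lemma graph_raftK1: "graph (raftK1_V n) (raftK1_E n)"
  unfolding graph_def raftK1_E_def raftK1_V_def raft_E_def raft_V_def by auto

lemma one_perfectly_orientable_P3_raft:
  "one_perfectly_orientable (strong_prod_E P3_V P3_E (raft_V n) (raft_E n))"
proof -
  interpret cobipartite_threshold "raft_V n" "raft_E n" "{False} \<times> {0..n}" "{True} \<times> {0..n}" snd "n + 1"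
    by unfold_locales (simp_all add: graph_raft, auto simp: raft_E_def raft_V_def)
  show ?thesis by (rule one_perfectly_orientable_P3_strong_prod)
qed

lemma one_perfectly_orientable_P3_raftK1:
  "one_perfectly_orientable (strong_prod_E P3_V P3_E (raftK1_V n) (raftK1_E n))"
proof -
  interpret cobipartite_threshold "raftK1_V n" "raftK1_E n"
    "insert None (Some ` ({False} \<times> {0..n}))" "Some ` ({True} \<times> {0..n})"
    "case_option (n + 1) snd" "n + 1"
    by unfold_locales
      (simp_all add: graph_raftK1, auto simp: raftK1_E_def raftK1_V_def raft_E_def raft_V_def)
  show ?thesis by (rule one_perfectly_orientable_P3_strong_prod)
qed

section \<open>Obstructions\<close>

definition induced_P3 :: "'a set \<Rightarrow> ('a \<Rightarrow> 'a \<Rightarrow> bool) \<Rightarrow> 'a \<Rightarrow> 'a \<Rightarrow> 'a \<Rightarrow> bool" where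
  "induced_P3 V E a0 a1 a2 \<longleftrightarrow> a0 \<in> V \<and> a1 \<in> V \<and> a2 \<in> V
     \<and> E a0 a1 \<and> E a1 a2 \<and> \<not> E a0 a2 \<and> a0 \<noteq> a2"

definition induced_P4 :: "'a set \<Rightarrow> ('a \<Rightarrow> 'a \<Rightarrow> bool) \<Rightarrow> 'a \<Rightarrow> 'a \<Rightarrow> 'a \<Rightarrow> 'a \<Rightarrow> bool" where
  "induced_P4 V E a0 a1 a2 a3 \<longleftrightarrow> a0 \<in> V \<and> a1 \<in> V \<and> a2 \<in> V \<and> a3 \<in> V
     \<and> E a0 a1 \<and> E a1 a2 \<and> E a2 a3
     \<and> \<not> E a0 a2 \<and> a0 \<noteq> a2 \<and> \<not> E a0 a3 \<and> a0 \<noteq> a3 \<and> \<not> E a1 a3 \<and> a1 \<noteq> a3"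

definition induced_P5 :: "'a set \<Rightarrow> ('a \<Rightarrow> 'a \<Rightarrow> bool) \<Rightarrow> 'a \<Rightarrow> 'a \<Rightarrow> 'a \<Rightarrow> 'a \<Rightarrow> 'a \<Rightarrow> bool" where
  "induced_P5 V E b0 b1 b2 b3 b4 \<longleftrightarrow> b0 \<in> V \<and> b1 \<in> V \<and> b2 \<in> V \<and> b3 \<in> V \<and> b4 \<in> V
     \<and> E b0 b1 \<and> E b1 b2 \<and> E b2 b3 \<and> E b3 b4
     \<and> \<not> E b0 b2 \<and> b0 \<noteq> b2 \<and> \<not> E b0 b3 \<and> b0 \<noteq> b3 \<and> \<not> E b0 b4 \<and> b0 \<noteq> b4
     \<and> \<not> E b1 b3 \<and> b1 \<noteq> b3 \<and> \<not> E b1 b4 \<and> b1 \<noteq> b4 \<and> \<not> E b2 b4 \<and> b2 \<noteq> b4"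

definition induced_C4 :: "'a set \<Rightarrow> ('a \<Rightarrow> 'a \<Rightarrow> bool) \<Rightarrow> 'a \<Rightarrow> 'a \<Rightarrow> 'a \<Rightarrow> 'a \<Rightarrow> bool" where
  "induced_C4 V E b0 b1 b2 b3 \<longleftrightarrow> b0 \<in> V \<and> b1 \<in> V \<and> b2 \<in> V \<and> b3 \<in> V
     \<and> E b0 b1 \<and> E b1 b2 \<and> E b2 b3 \<and> E b3 b0
     \<and> \<not> E b0 b2 \<and> b0 \<noteq> b2 \<and> \<not> E b1 b3 \<and> b1 \<noteq> b3"

definition induced_C5 :: "'a set \<Rightarrow> ('a \<Rightarrow> 'a \<Rightarrow> bool) \<Rightarrow> 'a \<Rightarrow> 'a \<Rightarrow> 'a \<Rightarrow> 'a \<Rightarrow> 'a \<Rightarrow> bool" where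
  "induced_C5 V E b0 b1 b2 b3 b4 \<longleftrightarrow> b0 \<in> V \<and> b1 \<in> V \<and> b2 \<in> V \<and> b3 \<in> V \<and> b4 \<in> V
     \<and> E b0 b1 \<and> E b1 b2 \<and> E b2 b3 \<and> E b3 b4 \<and> E b4 b0
     \<and> \<not> E b0 b2 \<and> b0 \<noteq> b2 \<and> \<not> E b0 b3 \<and> b0 \<noteq> b3
     \<and> \<not> E b1 b3 \<and> b1 \<noteq> b3 \<and> \<not> E b1 b4 \<and> b1 \<noteq> b4 \<and> \<not> E b2 b4 \<and> b2 \<noteq> b4"

definition induced_claw :: "'a set \<Rightarrow> ('a \<Rightarrow> 'a \<Rightarrow> bool) \<Rightarrow> 'a \<Rightarrow> 'a \<Rightarrow> 'a \<Rightarrow> 'a \<Rightarrow> bool" where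
  "induced_claw V E b0 b1 b2 b3 \<longleftrightarrow> b0 \<in> V \<and> b1 \<in> V \<and> b2 \<in> V \<and> b3 \<in> V
     \<and> E b0 b1 \<and> E b0 b2 \<and> E b0 b3
     \<and> \<not> E b1 b2 \<and> b1 \<noteq> b2 \<and> \<not> E b1 b3 \<and> b1 \<noteq> b3 \<and> \<not> E b2 b3 \<and> b2 \<noteq> b3"

definition induced_bull :: "'a set \<Rightarrow> ('a \<Rightarrow> 'a \<Rightarrow> bool) \<Rightarrow> 'a \<Rightarrow> 'a \<Rightarrow> 'a \<Rightarrow> 'a \<Rightarrow> 'a \<Rightarrow> bool" where
  "induced_bull V E b0 b1 b2 b3 b4 \<longleftrightarrow> b0 \<in> V \<and> b1 \<in> V \<and> b2 \<in> V \<and> b3 \<in> V \<and> b4 \<in> V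
     \<and> E b0 b1 \<and> E b0 b2 \<and> E b1 b2 \<and> E b0 b3 \<and> E b1 b4
     \<and> \<not> E b0 b4 \<and> b0 \<noteq> b4 \<and> \<not> E b1 b3 \<and> b1 \<noteq> b3 \<and> \<not> E b2 b3 \<and> b2 \<noteq> b3
     \<and> \<not> E b2 b4 \<and> b2 \<noteq> b4 \<and> \<not> E b3 b4 \<and> b3 \<noteq> b4"

locale one_perfectly_oriented_strong_prod =
  fixes VG :: "'a set" and EG :: "'a \<Rightarrow> 'a \<Rightarrow> bool"
    and VH :: "'b set" and EH :: "'b \<Rightarrow> 'b \<Rightarrow> bool"
    and D :: "'a \<times> 'b \<Rightarrow> 'a \<times> 'b \<Rightarrow> bool"
  assumes graph_G: "graph VG EG" and graph_H: "graph VH EH"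
    and one_perfect: "one_perfect_orientation (strong_prod_E VG EG VH EH) D"
begin

lemma edge_oriented: "strong_prod_E VG EG VH EH p q \<Longrightarrow> D p q \<or> D q p"
  using one_perfect unfolding one_perfect_orientation_def orientation_def by blast

lemma no_common_out_nonadjacent:
  "q \<noteq> r \<Longrightarrow> \<not> strong_prod_E VG EG VH EH q r \<Longrightarrow> \<not> (D p q \<and> D p r)"
  using one_perfect unfolding one_perfect_orientation_def by blast

lemma EG_commute: "EG u v \<longleftrightarrow> EG v u"
  using graph_G unfolding graph_def by blast

lemma EH_commute: "EH u v \<longleftrightarrow> EH v u"
  using graph_H unfolding graph_def by blast

lemma EG_irrefl: "\<not> EG u u"
  using graph_G unfolding graph_def by blast

lemma EH_irrefl: "\<not> EH u u"
  using graph_H unfolding graph_def by blast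

lemmas adjacency_facts = strong_prod_E_def EG_commute EH_commute EG_irrefl EH_irrefl

text \<open>Each product below contains edges that must be oriented and non-adjacent pairs that may not
  be common out-neighbours; the listed instances of these two constraints are already
  propositionally unsatisfiable.\<close>

lemma no_P3_claw:
  assumes "induced_P3 VG EG a0 a1 a2" and "induced_claw VH EH b0 b1 b2 b3"
  shows False
proof -
  have
    "\<not> (D (a0,b0) (a1,b1) \<and> D (a0,b0) (a1,b2))"
    "\<not> (D (a0,b0) (a1,b1) \<and> D (a0,b0) (a1,b3))"
    "\<not> (D (a0,b0) (a1,b2) \<and> D (a0,b0) (a1,b3))"
    "\<not> (D (a1,b1) (a0,b0) \<and> D (a1,b1) (a2,b0))"
    "\<not> (D (a1,b2) (a0,b0) \<and> D (a1,b2) (a2,b0))"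
    "\<not> (D (a1,b3) (a0,b0) \<and> D (a1,b3) (a2,b0))"
    "\<not> (D (a2,b0) (a1,b1) \<and> D (a2,b0) (a1,b2))"
    "\<not> (D (a2,b0) (a1,b1) \<and> D (a2,b0) (a1,b3))"
    "\<not> (D (a2,b0) (a1,b2) \<and> D (a2,b0) (a1,b3))"
    "D (a1,b2) (a2,b0) \<or> D (a2,b0) (a1,b2)"
    "D (a0,b0) (a1,b1) \<or> D (a1,b1) (a0,b0)"
    "D (a1,b3) (a2,b0) \<or> D (a2,b0) (a1,b3)"
    "D (a0,b0) (a1,b3) \<or> D (a1,b3) (a0,b0)"
    "D (a1,b1) (a2,b0) \<or> D (a2,b0) (a1,b1)"
    "D (a0,b0) (a1,b2) \<or> D (a1,b2) (a0,b0)"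
    using assms unfolding induced_P3_def induced_claw_def
    by ((intro no_common_out_nonadjacent edge_oriented; auto simp: adjacency_facts))+
  then show False by sat
qed

lemma no_P3_C4:
  assumes "induced_P3 VG EG a0 a1 a2" and "induced_C4 VH EH b0 b1 b2 b3"
  shows False
proof -
  have
    "\<not> (D (a0,b3) (a1,b0) \<and> D (a0,b3) (a1,b2))"
    "\<not> (D (a1,b0) (a0,b3) \<and> D (a1,b0) (a2,b1))"
    "\<not> (D (a1,b0) (a0,b3) \<and> D (a1,b0) (a2,b3))"
    "\<not> (D (a1,b2) (a0,b3) \<and> D (a1,b2) (a2,b1))"
    "\<not> (D (a1,b2) (a0,b3) \<and> D (a1,b2) (a2,b3))"
    "\<not> (D (a2,b0) (a2,b1) \<and> D (a2,b0) (a2,b3))"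
    "\<not> (D (a2,b1) (a1,b0) \<and> D (a2,b1) (a2,b2))"
    "\<not> (D (a2,b1) (a1,b2) \<and> D (a2,b1) (a2,b0))"
    "\<not> (D (a2,b2) (a2,b1) \<and> D (a2,b2) (a2,b3))"
    "\<not> (D (a2,b3) (a1,b0) \<and> D (a2,b3) (a2,b2))"
    "\<not> (D (a2,b3) (a1,b2) \<and> D (a2,b3) (a2,b0))"
    "D (a2,b0) (a2,b1) \<or> D (a2,b1) (a2,b0)"
    "D (a1,b2) (a2,b1) \<or> D (a2,b1) (a1,b2)"
    "D (a2,b1) (a2,b2) \<or> D (a2,b2) (a2,b1)"
    "D (a1,b0) (a2,b1) \<or> D (a2,b1) (a1,b0)"
    "D (a0,b3) (a1,b0) \<or> D (a1,b0) (a0,b3)"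
    "D (a1,b0) (a2,b3) \<or> D (a2,b3) (a1,b0)"
    "D (a1,b2) (a2,b3) \<or> D (a2,b3) (a1,b2)"
    "D (a2,b2) (a2,b3) \<or> D (a2,b3) (a2,b2)"
    "D (a0,b3) (a1,b2) \<or> D (a1,b2) (a0,b3)"
    "D (a2,b0) (a2,b3) \<or> D (a2,b3) (a2,b0)"
    using assms unfolding induced_P3_def induced_C4_def
    by ((intro no_common_out_nonadjacent edge_oriented; auto simp: adjacency_facts))+
  then show False by sat
qed

lemma no_P3_bull:
  assumes "induced_P3 VG EG a0 a1 a2" and "induced_bull VH EH b0 b1 b2 b3 b4"
  shows False
proof -
  have
    "\<not> (D (a0,b0) (a0,b1) \<and> D (a0,b0) (a1,b3))"
    "\<not> (D (a0,b0) (a1,b2) \<and> D (a0,b0) (a1,b3))"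
    "\<not> (D (a0,b1) (a0,b0) \<and> D (a0,b1) (a1,b4))"
    "\<not> (D (a0,b1) (a1,b2) \<and> D (a0,b1) (a1,b4))"
    "\<not> (D (a1,b2) (a0,b0) \<and> D (a1,b2) (a2,b1))"
    "\<not> (D (a1,b2) (a0,b1) \<and> D (a1,b2) (a2,b0))"
    "\<not> (D (a1,b3) (a0,b0) \<and> D (a1,b3) (a2,b0))"
    "\<not> (D (a1,b4) (a0,b1) \<and> D (a1,b4) (a2,b1))"
    "\<not> (D (a2,b0) (a1,b2) \<and> D (a2,b0) (a1,b3))"
    "\<not> (D (a2,b0) (a1,b3) \<and> D (a2,b0) (a2,b1))"
    "\<not> (D (a2,b1) (a1,b2) \<and> D (a2,b1) (a1,b4))"
    "\<not> (D (a2,b1) (a1,b4) \<and> D (a2,b1) (a2,b0))"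
    "D (a2,b0) (a2,b1) \<or> D (a2,b1) (a2,b0)"
    "D (a1,b2) (a2,b0) \<or> D (a2,b0) (a1,b2)"
    "D (a0,b0) (a0,b1) \<or> D (a0,b1) (a0,b0)"
    "D (a1,b4) (a2,b1) \<or> D (a2,b1) (a1,b4)"
    "D (a1,b3) (a2,b0) \<or> D (a2,b0) (a1,b3)"
    "D (a0,b0) (a1,b3) \<or> D (a1,b3) (a0,b0)"
    "D (a0,b1) (a1,b4) \<or> D (a1,b4) (a0,b1)"
    "D (a0,b0) (a1,b2) \<or> D (a1,b2) (a0,b0)"
    "D (a1,b2) (a2,b1) \<or> D (a2,b1) (a1,b2)"
    "D (a0,b1) (a1,b2) \<or> D (a1,b2) (a0,b1)"
    using assms unfolding induced_P3_def induced_bull_def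
    by ((intro no_common_out_nonadjacent edge_oriented; auto simp: adjacency_facts))+
  then show False by sat
qed

lemma no_P3_P5:
  assumes "induced_P3 VG EG a0 a1 a2" and "induced_P5 VH EH b0 b1 b2 b3 b4"
  shows False
proof -
  have
    "\<not> (D (a0,b1) (a1,b0) \<and> D (a0,b1) (a1,b2))"
    "\<not> (D (a0,b3) (a1,b2) \<and> D (a0,b3) (a1,b4))"
    "\<not> (D (a1,b0) (a0,b1) \<and> D (a1,b0) (a2,b1))"
    "\<not> (D (a1,b2) (a0,b1) \<and> D (a1,b2) (a0,b3))"
    "\<not> (D (a1,b2) (a0,b1) \<and> D (a1,b2) (a2,b3))"
    "\<not> (D (a1,b2) (a0,b3) \<and> D (a1,b2) (a2,b1))"
    "\<not> (D (a1,b4) (a0,b3) \<and> D (a1,b4) (a2,b3))"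
    "\<not> (D (a2,b1) (a1,b0) \<and> D (a2,b1) (a1,b2))"
    "\<not> (D (a2,b1) (a1,b0) \<and> D (a2,b1) (a2,b2))"
    "\<not> (D (a2,b2) (a2,b1) \<and> D (a2,b2) (a2,b3))"
    "\<not> (D (a2,b3) (a1,b2) \<and> D (a2,b3) (a1,b4))"
    "\<not> (D (a2,b3) (a1,b4) \<and> D (a2,b3) (a2,b2))"
    "D (a1,b2) (a2,b1) \<or> D (a2,b1) (a1,b2)"
    "D (a2,b1) (a2,b2) \<or> D (a2,b2) (a2,b1)"
    "D (a1,b4) (a2,b3) \<or> D (a2,b3) (a1,b4)"
    "D (a0,b1) (a1,b0) \<or> D (a1,b0) (a0,b1)"
    "D (a0,b3) (a1,b4) \<or> D (a1,b4) (a0,b3)"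
    "D (a1,b0) (a2,b1) \<or> D (a2,b1) (a1,b0)"
    "D (a1,b2) (a2,b3) \<or> D (a2,b3) (a1,b2)"
    "D (a2,b2) (a2,b3) \<or> D (a2,b3) (a2,b2)"
    "D (a0,b3) (a1,b2) \<or> D (a1,b2) (a0,b3)"
    "D (a0,b1) (a1,b2) \<or> D (a1,b2) (a0,b1)"
    using assms unfolding induced_P3_def induced_P5_def
    by ((intro no_common_out_nonadjacent edge_oriented; auto simp: adjacency_facts))+
  then show False by sat
qed

lemma no_P3_C5:
  assumes "induced_P3 VG EG a0 a1 a2" and "induced_C5 VH EH b0 b1 b2 b3 b4"
  shows False
proof -
  have
    "\<not> (D (a0,b4) (a1,b0) \<and> D (a0,b4) (a1,b3))"
    "\<not> (D (a1,b0) (a0,b4) \<and> D (a1,b0) (a2,b1))"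
    "\<not> (D (a1,b0) (a0,b4) \<and> D (a1,b0) (a2,b4))"
    "\<not> (D (a1,b3) (a0,b4) \<and> D (a1,b3) (a2,b2))"
    "\<not> (D (a1,b3) (a0,b4) \<and> D (a1,b3) (a2,b4))"
    "\<not> (D (a2,b0) (a2,b1) \<and> D (a2,b0) (a2,b4))"
    "\<not> (D (a2,b1) (a1,b0) \<and> D (a2,b1) (a2,b2))"
    "\<not> (D (a2,b1) (a2,b0) \<and> D (a2,b1) (a2,b2))"
    "\<not> (D (a2,b2) (a1,b3) \<and> D (a2,b2) (a2,b1))"
    "\<not> (D (a2,b2) (a2,b1) \<and> D (a2,b2) (a2,b3))"
    "\<not> (D (a2,b3) (a2,b2) \<and> D (a2,b3) (a2,b4))"
    "\<not> (D (a2,b4) (a1,b0) \<and> D (a2,b4) (a2,b3))"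
    "\<not> (D (a2,b4) (a1,b3) \<and> D (a2,b4) (a2,b0))"
    "D (a2,b0) (a2,b1) \<or> D (a2,b1) (a2,b0)"
    "D (a1,b3) (a2,b4) \<or> D (a2,b4) (a1,b3)"
    "D (a1,b0) (a2,b4) \<or> D (a2,b4) (a1,b0)"
    "D (a1,b0) (a2,b1) \<or> D (a2,b1) (a1,b0)"
    "D (a0,b4) (a1,b3) \<or> D (a1,b3) (a0,b4)"
    "D (a2,b0) (a2,b4) \<or> D (a2,b4) (a2,b0)"
    "D (a2,b2) (a2,b3) \<or> D (a2,b3) (a2,b2)"
    "D (a0,b4) (a1,b0) \<or> D (a1,b0) (a0,b4)"
    "D (a2,b1) (a2,b2) \<or> D (a2,b2) (a2,b1)"
    "D (a1,b3) (a2,b2) \<or> D (a2,b2) (a1,b3)"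
    "D (a2,b3) (a2,b4) \<or> D (a2,b4) (a2,b3)"
    using assms unfolding induced_P3_def induced_C5_def
    by ((intro no_common_out_nonadjacent edge_oriented; auto simp: adjacency_facts))+
  then show False by sat
qed

lemma no_P4_P4:
  assumes "induced_P4 VG EG a0 a1 a2 a3" and "induced_P4 VH EH b0 b1 b2 b3"
  shows False
proof -
  have
    "\<not> (D (a0,b2) (a1,b1) \<and> D (a0,b2) (a1,b3))"
    "\<not> (D (a1,b1) (a0,b2) \<and> D (a1,b1) (a2,b1))"
    "\<not> (D (a1,b1) (a0,b2) \<and> D (a1,b1) (a2,b2))"
    "\<not> (D (a1,b1) (a1,b2) \<and> D (a1,b1) (a2,b0))"
    "\<not> (D (a1,b1) (a2,b0) \<and> D (a1,b1) (a2,b2))"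
    "\<not> (D (a1,b2) (a1,b1) \<and> D (a1,b2) (a2,b3))"
    "\<not> (D (a1,b3) (a0,b2) \<and> D (a1,b3) (a2,b2))"
    "\<not> (D (a2,b0) (a1,b1) \<and> D (a2,b0) (a3,b1))"
    "\<not> (D (a2,b1) (a1,b1) \<and> D (a2,b1) (a3,b2))"
    "\<not> (D (a2,b2) (a1,b1) \<and> D (a2,b2) (a1,b3))"
    "\<not> (D (a2,b2) (a1,b1) \<and> D (a2,b2) (a3,b1))"
    "\<not> (D (a2,b2) (a1,b3) \<and> D (a2,b2) (a3,b1))"
    "\<not> (D (a2,b3) (a1,b2) \<and> D (a2,b3) (a3,b2))"
    "\<not> (D (a3,b1) (a2,b0) \<and> D (a3,b1) (a2,b2))"
    "\<not> (D (a3,b2) (a2,b1) \<and> D (a3,b2) (a2,b3))"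
    "D (a0,b2) (a1,b1) \<or> D (a1,b1) (a0,b2)"
    "D (a2,b1) (a3,b2) \<or> D (a3,b2) (a2,b1)"
    "D (a1,b1) (a2,b1) \<or> D (a2,b1) (a1,b1)"
    "D (a1,b1) (a2,b2) \<or> D (a2,b2) (a1,b1)"
    "D (a1,b1) (a2,b0) \<or> D (a2,b0) (a1,b1)"
    "D (a1,b2) (a2,b3) \<or> D (a2,b3) (a1,b2)"
    "D (a2,b2) (a3,b1) \<or> D (a3,b1) (a2,b2)"
    "D (a1,b3) (a2,b2) \<or> D (a2,b2) (a1,b3)"
    "D (a2,b3) (a3,b2) \<or> D (a3,b2) (a2,b3)"
    "D (a0,b2) (a1,b3) \<or> D (a1,b3) (a0,b2)"
    "D (a1,b1) (a1,b2) \<or> D (a1,b2) (a1,b1)"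
    "D (a2,b0) (a3,b1) \<or> D (a3,b1) (a2,b0)"
    using assms unfolding induced_P4_def
    by ((intro no_common_out_nonadjacent edge_oriented; auto simp: adjacency_facts))+
  then show False by sat
qed

end

section \<open>Graphs without the obstructions\<close>

definition claw_C4_bull_P5_C5_free :: "'a set \<Rightarrow> ('a \<Rightarrow> 'a \<Rightarrow> bool) \<Rightarrow> bool" where
  "claw_C4_bull_P5_C5_free V E \<longleftrightarrow>
     (\<forall>b0 b1 b2 b3. \<not> induced_claw V E b0 b1 b2 b3) \<and> (\<forall>b0 b1 b2 b3. \<not> induced_C4 V E b0 b1 b2 b3)
     \<and> (\<forall>b0 b1 b2 b3 b4. \<not> induced_bull V E b0 b1 b2 b3 b4)
     \<and> (\<forall>b0 b1 b2 b3 b4. \<not> induced_P5 V E b0 b1 b2 b3 b4)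
     \<and> (\<forall>b0 b1 b2 b3 b4. \<not> induced_C5 V E b0 b1 b2 b3 b4)"

lemma (in one_perfectly_oriented_strong_prod) claw_C4_bull_P5_C5_free_if_induced_P3:
  assumes "induced_P3 VG EG a0 a1 a2"
  shows "claw_C4_bull_P5_C5_free VH EH"
  unfolding claw_C4_bull_P5_C5_free_def
  by (auto dest: no_P3_claw[OF assms] no_P3_C4[OF assms] no_P3_bull[OF assms] no_P3_P5[OF assms]
    no_P3_C5[OF assms])

definition independent_triple :: "'a set \<Rightarrow> ('a \<Rightarrow> 'a \<Rightarrow> bool) \<Rightarrow> 'a \<Rightarrow> 'a \<Rightarrow> 'a \<Rightarrow> bool" where
  "independent_triple V E a b c \<longleftrightarrow> a \<in> V \<and> b \<in> V \<and> c \<in> V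
     \<and> \<not> E a b \<and> \<not> E a c \<and> \<not> E b c \<and> a \<noteq> b \<and> a \<noteq> c \<and> b \<noteq> c"

locale connected_finite_graph =
  fixes V :: "'a set" and E :: "'a \<Rightarrow> 'a \<Rightarrow> bool"
  assumes graph: "graph V E" and connected: "connected_graph V E"
begin

lemma adj_commute: "E u v \<longleftrightarrow> E v u"
  using graph unfolding graph_def by blast

lemma irrefl: "\<not> E v v"
  using graph unfolding graph_def by blast

lemma adj_in_V: "E u v \<Longrightarrow> u \<in> V" "E u v \<Longrightarrow> v \<in> V"
  using graph unfolding graph_def by blast+

lemma finite_V: "finite V"
  using graph unfolding graph_def by blast

lemma twin_if_all_adjacent:
  assumes "u \<in> V" "w \<in> V" "u \<noteq> w" "\<And>x y. x \<in> V \<Longrightarrow> y \<in> V \<Longrightarrow> x \<noteq> y \<Longrightarrow> E x y"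
  shows "has_true_twins V E"
  unfolding has_true_twins_def closed_nbhd_def using assms by blast

lemma two_vertices:
  assumes "card V \<ge> 2"
  obtains u w where "u \<in> V" "w \<in> V" "u \<noteq> w"
  using assms card_le_Suc0_iff_eq[OF finite_V] by (metis not_less_eq_eq numeral_2_eq_2)

definition path_dist :: "'a \<Rightarrow> 'a \<Rightarrow> nat" where
  "path_dist u v = (LEAST n. (E ^^ n) u v)"

lemma relpowp_path_dist:
  assumes "u \<in> V" "v \<in> V"
  shows "(E ^^ path_dist u v) u v"
proof -
  have "E\<^sup>*\<^sup>* u v" using connected assms unfolding connected_graph_def by blast
  then obtain n where "(E ^^ n) u v" using rtranclp_imp_relpowp by metis
  then show ?thesis unfolding path_dist_def by (rule LeastI)
qed

lemma path_dist_le: "(E ^^ n) u v \<Longrightarrow> path_dist u v \<le> n"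
  unfolding path_dist_def by (rule Least_le)

lemma path_dist_self: "path_dist u u = 0"
  using path_dist_le[of 0 u u] by simp

lemma path_dist_eq_0: "u \<in> V \<Longrightarrow> v \<in> V \<Longrightarrow> path_dist u v = 0 \<Longrightarrow> u = v"
  using relpowp_path_dist[of u v] by simp

lemma path_dist_eq_1: "u \<in> V \<Longrightarrow> v \<in> V \<Longrightarrow> path_dist u v = 1 \<Longrightarrow> E u v"
  using relpowp_path_dist[of u v] by (auto simp: relcompp_apply)

lemma path_dist_adj:
  assumes "E u w" "v \<in> V"
  shows "path_dist u v \<le> Suc (path_dist w v)"
proof -
  have "(E ^^ path_dist w v) w v" using relpowp_path_dist adj_in_V assms by blast
  then have "(E ^^ Suc (path_dist w v)) u v" using relpowp_Suc_I2[where P = E, OF assms(1)] by blast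
  then show ?thesis by (rule path_dist_le)
qed

lemma path_dist_far:
  assumes "v \<in> V" "path_dist w v + 2 \<le> path_dist u v"
  shows "\<not> E u w" "u \<noteq> w"
  using path_dist_adj[of u w v] assms by auto

lemma path_dist_step:
  assumes "u \<in> V" "v \<in> V" "path_dist u v = Suc m"
  obtains w where "E u w" "w \<in> V" "path_dist w v = m"
proof -
  have "(E ^^ Suc m) u v" using relpowp_path_dist[OF assms(1,2)] assms(3) by simp
  then obtain w where w: "E u w" "(E ^^ m) w v" using relpowp_Suc_D2 by metis
  have "path_dist w v \<le> m" using w(2) by (rule path_dist_le)
  moreover have "Suc m \<le> Suc (path_dist w v)" using path_dist_adj[OF w(1) assms(2)] assms(3) by simp
  ultimately show ?thesis using that w adj_in_V by fastforce
qed

lemma induced_P3_if_twin_free: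
  assumes "\<not> has_true_twins V E" and "card V \<ge> 2"
  obtains a b c where "induced_P3 V E a b c"
proof -
  obtain u w where uw: "u \<in> V" "w \<in> V" "u \<noteq> w" "\<not> E u w"
    using two_vertices[OF assms(2)] twin_if_all_adjacent assms(1) by metis
  then have "path_dist u w \<noteq> 0" "path_dist u w \<noteq> 1"
    using path_dist_eq_0 path_dist_eq_1 by blast+
  then obtain m where m: "path_dist u w = Suc (Suc m)" by (metis One_nat_def not0_implies_Suc)
  obtain v1 where v1: "E u v1" "v1 \<in> V" "path_dist v1 w = Suc m"
    using path_dist_step[OF uw(1,2) m] by blast
  obtain v2 where v2: "E v1 v2" "v2 \<in> V" "path_dist v2 w = m"
    using path_dist_step[OF v1(2) uw(2) v1(3)] by blast
  have "\<not> E u v2" "u \<noteq> v2" using path_dist_far[OF uw(2)] m v2 by auto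
  then show ?thesis using that[of u v1 v2] uw v1 v2 unfolding induced_P3_def by blast
qed

definition non_degree :: "'a \<Rightarrow> nat" where
  "non_degree u = card {w \<in> V. w \<noteq> u \<and> \<not> E u w}"

end

locale claw_C4_bull_P5_C5_free_graph = connected_finite_graph +
  assumes free: "claw_C4_bull_P5_C5_free V E"
begin

lemma no_claw: "\<not> induced_claw V E b0 b1 b2 b3"
  and no_C4: "\<not> induced_C4 V E b0 b1 b2 b3"
  and no_bull: "\<not> induced_bull V E b0 b1 b2 b3 b4"
  and no_P5: "\<not> induced_P5 V E b0 b1 b2 b3 b4"
  and no_C5: "\<not> induced_C5 V E b0 b1 b2 b3 b4"
  using free unfolding claw_C4_bull_P5_C5_free_def by auto

text \<open>A longer shortest path would contain an induced \<open>P5\<close>.\<close>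

lemma path_dist_le_3:
  assumes "u \<in> V" "v \<in> V"
  shows "path_dist u v \<le> 3"
proof (rule ccontr)
  assume "\<not> path_dist u v \<le> 3"
  then have "path_dist u v = Suc (Suc (Suc (Suc (path_dist u v - 4))))" by simp
  then obtain m where m: "path_dist u v = Suc (Suc (Suc (Suc m)))" by blast
  obtain w1 where w1: "E u w1" "w1 \<in> V" "path_dist w1 v = Suc (Suc (Suc m))"
    using path_dist_step[OF assms m] by blast
  obtain w2 where w2: "E w1 w2" "w2 \<in> V" "path_dist w2 v = Suc (Suc m)"
    using path_dist_step[OF w1(2) assms(2) w1(3)] by blast
  obtain w3 where w3: "E w2 w3" "w3 \<in> V" "path_dist w3 v = Suc m"
    using path_dist_step[OF w2(2) assms(2) w2(3)] by blast
  obtain w4 where w4: "E w3 w4" "w4 \<in> V" "path_dist w4 v = m"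
    using path_dist_step[OF w3(2) assms(2) w3(3)] by blast
  have "induced_P5 V E u w1 w2 w3 w4"
    unfolding induced_P5_def using assms w1 w2 w3 w4 m path_dist_far[OF assms(2)] by auto
  then show False using no_P5 by blast
qed

lemma common_neighbour_two_steps_adjacent:
  assumes "independent_triple V E a b c" "E v a" "E v b" "E v u" "E u c"
  shows "E v c"
proof (rule ccontr)
  assume "\<not> E v c"
  have abc: "a \<in> V" "b \<in> V" "c \<in> V" "\<not> E a b" "\<not> E a c" "\<not> E b c" "a \<noteq> b" "a \<noteq> c" "b \<noteq> c"
    using assms(1) unfolding independent_triple_def by blast+
  have uv: "v \<in> V" "u \<in> V" "u \<noteq> a" "u \<noteq> b" "v \<noteq> c"
    using assms(2-5) abc adj_in_V adj_commute by metis+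
  consider "E u a" "E u b" | "\<not> E u a" "\<not> E u b" | "E u a" "\<not> E u b" | "\<not> E u a" "E u b"
    by blast
  then show False
  proof cases
    case 1
    then have "induced_claw V E u a b c" using abc assms uv unfolding induced_claw_def by blast
    then show False using no_claw by blast
  next
    case 2
    then have "induced_claw V E v a b u"
      using abc assms uv adj_commute unfolding induced_claw_def by auto
    then show False using no_claw by blast
  next
    case 3
    then have "induced_bull V E v u a b c"
      using abc assms uv \<open>\<not> E v c\<close> adj_commute unfolding induced_bull_def by auto
    then show False using no_bull by blast
  next
    case 4
    then have "induced_bull V E v u b a c"
      using abc assms uv \<open>\<not> E v c\<close> adj_commute unfolding induced_bull_def by auto
    then show False using no_bull by blast
  qed
qed

lemma common_neighbour_three_steps_adjacent:
  assumes "independent_triple V E a b c" "E v a" "E v b" "E v u" "E u w" "E w c" "\<not> E v c"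
  shows "E v w"
proof (rule ccontr)
  assume "\<not> E v w"
  have abc: "a \<in> V" "b \<in> V" "c \<in> V" "\<not> E a b" "\<not> E a c" "\<not> E b c" "a \<noteq> b" "a \<noteq> c" "b \<noteq> c"
    using assms(1) unfolding independent_triple_def by blast+
  have vw: "v \<in> V" "w \<in> V" "w \<noteq> a" "w \<noteq> b" "w \<noteq> v" "v \<noteq> c"
    using assms(2-7) abc adj_in_V adj_commute by metis+
  consider "E w a" "E w b" | "E w a" "\<not> E w b" | "\<not> E w a" "E w b" | "\<not> E w a" "\<not> E w b"
    by blast
  then show False
  proof cases
    case 1
    then have "induced_claw V E w a b c" using abc vw assms adj_commute unfolding induced_claw_def by auto
    then show False using no_claw by blast
  next
    case 2
    then have "induced_P5 V E c w a v b"
      using abc vw assms \<open>\<not> E v w\<close> adj_commute unfolding induced_P5_def by auto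
    then show False using no_P5 by blast
  next
    case 3
    then have "induced_P5 V E c w b v a"
      using abc vw assms \<open>\<not> E v w\<close> adj_commute unfolding induced_P5_def by auto
    then show False using no_P5 by blast
  next
    case 4
    then have "independent_triple V E a b w"
      using abc vw adj_commute unfolding independent_triple_def by auto
    then show False
      using common_neighbour_two_steps_adjacent assms(2-5) \<open>\<not> E v w\<close> by blast
  qed
qed

lemma independent_triple_no_common_neighbour:
  assumes "independent_triple V E a b c"
  shows "\<not> (E v a \<and> E v b)"
proof
  assume va: "E v a \<and> E v b"
  have c: "c \<in> V" "\<not> E a c" "\<not> E b c" and "a \<in> V" "b \<in> V" "a \<noteq> b" "\<not> E a b"
    using assms unfolding independent_triple_def by blast+
  have v: "v \<in> V" "v \<noteq> c" using va adj_in_V c adj_commute by metis+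
  show False
  proof (cases "E v c")
    case True
    then have "induced_claw V E v a b c" using assms v va unfolding independent_triple_def induced_claw_def by blast
    then show False using no_claw by blast
  next
    case nvc: False
    have "path_dist c v \<noteq> 0" "path_dist c v \<noteq> 1"
      using path_dist_eq_0 path_dist_eq_1 c v nvc adj_commute by metis+
    then consider "path_dist c v = 2" | "path_dist c v = 3"
      using path_dist_le_3[OF c(1) v(1)] by linarith
    then show False
    proof cases
      case 1
      then obtain u where "E c u" "u \<in> V" "path_dist u v = 1"
        using path_dist_step[OF c(1) v(1), of 1] by auto
      then have "E v u" "E u c" using path_dist_eq_1 v adj_commute by metis+
      then show False using common_neighbour_two_steps_adjacent[OF assms] va nvc by blast
    next
      case 2
      then obtain w where w: "E c w" "w \<in> V" "path_dist w v = 2"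
        using path_dist_step[OF c(1) v(1), of 2] by auto
      then obtain u where u: "E w u" "u \<in> V" "path_dist u v = 1"
        using path_dist_step[OF w(2) v(1), of 1] by auto
      have "E v u" "E u w" "E w c" using path_dist_eq_1 u w v adj_commute by metis+
      then have "E v w" using common_neighbour_three_steps_adjacent[OF assms] va nvc by blast
      moreover have "\<not> E w v" using path_dist_far[OF v(1), of v w] w path_dist_self by auto
      ultimately show False using adj_commute by blast
    qed
  qed
qed

lemma no_independent_triple: "\<not> independent_triple V E a b c"
proof
  assume abc: "independent_triple V E a b c"
  then have V: "a \<in> V" "b \<in> V" "c \<in> V" and "\<not> E a b" "a \<noteq> b"
    unfolding independent_triple_def by blast+
  then have "path_dist a b \<noteq> 0" "path_dist a b \<noteq> 1"
    using path_dist_eq_0 path_dist_eq_1 by blast+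
  then consider "path_dist a b = 2" | "path_dist a b = 3"
    using path_dist_le_3[OF V(1,2)] by linarith
  then show False
  proof cases
    case 1
    then obtain w where "E a w" "w \<in> V" "path_dist w b = 1"
      using path_dist_step[OF V(1,2), of 1] by auto
    then have "E w a" "E w b" using path_dist_eq_1 V adj_commute by metis+
    then show False using independent_triple_no_common_neighbour[OF abc] by blast
  next
    case 2
    then obtain w1 where w1: "E a w1" "w1 \<in> V" "path_dist w1 b = 2"
      using path_dist_step[OF V(1,2), of 2] by auto
    then obtain w2 where w2: "E w1 w2" "w2 \<in> V" "path_dist w2 b = 1"
      using path_dist_step[OF w1(2) V(2), of 1] by auto
    have "E w2 b" using path_dist_eq_1[OF w2(2) V(2) w2(3)] .
    show False
    proof (cases "E w2 c")
      case True
      have "independent_triple V E b c a" using abc adj_commute unfolding independent_triple_def by auto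
      then show False using independent_triple_no_common_neighbour \<open>E w2 b\<close> True by blast
    next
      case False
      have "\<not> E a w2" "a \<noteq> w2" using path_dist_far[OF V(2)] 2 w2 by auto
      moreover have "w2 \<noteq> c" using \<open>E w2 b\<close> abc adj_commute unfolding independent_triple_def by metis
      ultimately have "independent_triple V E a w2 c"
        using abc w2 False adj_commute unfolding independent_triple_def by auto
      then show False
        using independent_triple_no_common_neighbour w1 w2(1) adj_commute by metis
    qed
  qed
qed

lemma non_neighbours_adjacent:
  assumes "p \<in> V" "y \<in> V" "y' \<in> V" "y \<noteq> p" "y' \<noteq> p" "\<not> E p y" "\<not> E p y'" "y \<noteq> y'"
  shows "E y y'"
  using no_independent_triple[of p y y'] assms unfolding independent_triple_def by blast

lemma neighbours_of_max_non_degree_adjacent: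
  assumes p: "p \<in> V" and max: "\<And>u. u \<in> V \<Longrightarrow> non_degree u \<le> non_degree p"
    and "E p a" "E p b" "a \<noteq> b"
  shows "E a b"
proof (rule ccontr)
  assume "\<not> E a b"
  define Y where "Y = {w \<in> V. w \<noteq> p \<and> \<not> E p w}"
  have "finite Y" using finite_V unfolding Y_def by simp
  have one_side: False
    if ab: "E p a" "E p b" "\<not> E a b" "a \<noteq> b" and all_a: "\<forall>y\<in>Y. E y a" for a b
  proof -
    have V: "a \<in> V" "b \<in> V" "a \<notin> Y" using ab adj_in_V unfolding Y_def by auto
    have "\<not> E b y" if "y \<in> Y" for y
    proof
      assume "E b y"
      then have "induced_C4 V E p a y b"
        using that all_a ab V p adj_commute unfolding Y_def induced_C4_def by auto
      then show False using no_C4 by blast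
    qed
    then have "insert a Y \<subseteq> {w \<in> V. w \<noteq> b \<and> \<not> E b w}"
      using V ab adj_commute unfolding Y_def by auto
    then have "card (insert a Y) \<le> non_degree b"
      unfolding non_degree_def using finite_V by (intro card_mono) auto
    moreover have "non_degree p = card Y" unfolding non_degree_def Y_def by simp
    ultimately show False using max[OF V(2)] V(3) \<open>finite Y\<close> by simp
  qed
  have "(\<forall>y\<in>Y. E y a) \<or> (\<forall>y\<in>Y. E y b)"
  proof (rule ccontr)
    assume "\<not> ?thesis"
    then obtain y1 y2 where y: "y1 \<in> Y" "\<not> E y1 a" "y2 \<in> Y" "\<not> E y2 b" by blast
    have V: "a \<in> V" "b \<in> V" "a \<notin> Y" "b \<notin> Y" using assms adj_in_V unfolding Y_def by auto
    have "E y1 b" "E y2 a"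
      using y no_independent_triple[of y1 a b] no_independent_triple[of y2 a b] V \<open>\<not> E a b\<close>
        \<open>a \<noteq> b\<close> unfolding independent_triple_def by (auto simp: adj_commute Y_def)
    moreover have "E y2 y1" "y1 \<noteq> y2"
      using y non_neighbours_adjacent[OF p] calculation unfolding Y_def by blast+
    ultimately have "induced_C5 V E p a y2 y1 b"
      using y p V assms(3-5) \<open>\<not> E a b\<close> adj_commute unfolding Y_def induced_C5_def by auto
    then show False using no_C5 by blast
  qed
  then show False
    using one_side[of a b] one_side[of b a] assms(3-5) \<open>\<not> E a b\<close> adj_commute by blast
qed

lemma two_clique_partition:
  assumes twin_free: "\<not> has_true_twins V E" and "card V \<ge> 2"
  obtains X Y p where "V = X \<union> Y" "X \<inter> Y = {}" "Y \<noteq> {}" "p \<in> X" "\<And>y. y \<in> Y \<Longrightarrow> \<not> E p y"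
    "\<And>x x'. x \<in> X \<Longrightarrow> x' \<in> X \<Longrightarrow> x \<noteq> x' \<Longrightarrow> E x x'"
    "\<And>y y'. y \<in> Y \<Longrightarrow> y' \<in> Y \<Longrightarrow> y \<noteq> y' \<Longrightarrow> E y y'"
proof -
  have "V \<noteq> {}" using assms(2) by auto
  then have "Max (non_degree ` V) \<in> non_degree ` V" using finite_V by (intro Max_in) auto
  then obtain p where p: "p \<in> V" "non_degree p = Max (non_degree ` V)" by auto
  then have max: "\<And>u. u \<in> V \<Longrightarrow> non_degree u \<le> non_degree p"
    using finite_V by simp
  define Y where "Y = {w \<in> V. w \<noteq> p \<and> \<not> E p w}"
  have "Y \<noteq> {}"
  proof
    assume "Y = {}"
    then have "non_degree p = 0" unfolding non_degree_def Y_def by (simp only: card.empty)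
    then have "non_degree u = 0" if "u \<in> V" for u using max[OF that] by simp
    then have "E u w" if "u \<in> V" "w \<in> V" "u \<noteq> w" for u w
      using that finite_V unfolding non_degree_def by fastforce
    then show False
      using twin_free twin_if_all_adjacent two_vertices[OF assms(2)] by blast
  qed
  show ?thesis
  proof (rule that[of "V - Y" Y p])
    show "E x x'" if "x \<in> V - Y" "x' \<in> V - Y" "x \<noteq> x'" for x x'
      using that neighbours_of_max_non_degree_adjacent[OF p(1) max] adj_commute unfolding Y_def by blast
    show "E y y'" if "y \<in> Y" "y' \<in> Y" "y \<noteq> y'" for y y'
      using that non_neighbours_adjacent[OF p(1)] unfolding Y_def by blast
  qed (use p \<open>Y \<noteq> {}\<close> in \<open>auto simp: Y_def\<close>)
qed

end

section \<open>Rafts\<close>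

definition isomorphic_to_raft :: "'a set \<Rightarrow> ('a \<Rightarrow> 'a \<Rightarrow> bool) \<Rightarrow> bool" where
  "isomorphic_to_raft V E \<longleftrightarrow>
     (\<exists>n\<ge>1. graph_iso V E (raft_V n) (raft_E n)) \<or> (\<exists>n. graph_iso V E (raftK1_V n) (raftK1_E n))"

lemma graph_iso_by_card:
  assumes "inj_on \<phi> V" "\<phi> ` V \<subseteq> W" "finite W" "card W \<le> card V"
    and "\<And>u v. u \<in> V \<Longrightarrow> v \<in> V \<Longrightarrow> E u v \<longleftrightarrow> F (\<phi> u) (\<phi> v)"
  shows "graph_iso V E W F"
proof -
  have "card (\<phi> ` V) \<le> card W" using assms(3,2) by (rule card_mono)
  then have "card (\<phi> ` V) = card W" using assms(4) card_image[OF assms(1)] by linarith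
  then have "\<phi> ` V = W" using assms(2,3) by (intro card_subset_eq)
  then show ?thesis unfolding graph_iso_def bij_betw_def using assms(1,5) by blast
qed

lemma graph_iso_trans:
  assumes "graph_iso V1 E1 V2 E2" "graph_iso V2 E2 V3 E3"
  shows "graph_iso V1 E1 V3 E3"
proof -
  obtain f g where f: "bij_betw f V1 V2" "\<forall>u\<in>V1. \<forall>v\<in>V1. E1 u v \<longleftrightarrow> E2 (f u) (f v)"
    and g: "bij_betw g V2 V3" "\<forall>u\<in>V2. \<forall>v\<in>V2. E2 u v \<longleftrightarrow> E3 (g u) (g v)"
    using assms unfolding graph_iso_def by blast
  have "bij_betw (g \<circ> f) V1 V3" using f(1) g(1) by (rule bij_betw_trans)
  moreover have "E1 u v \<longleftrightarrow> E3 ((g \<circ> f) u) ((g \<circ> f) v)" if "u \<in> V1" "v \<in> V1" for u v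
    using f g that bij_betwE[OF f(1)] by simp
  ultimately show ?thesis unfolding graph_iso_def by blast
qed

lemma card_raft_V: "card (raft_V n) = 2 * (n + 1)"
  unfolding raft_V_def by (simp add: card_cartesian_product)

lemma finite_raft_V: "finite (raft_V n)"
  unfolding raft_V_def by simp

lemma card_raftK1_V: "card (raftK1_V n) = 2 * (n + 1) + 1"
  unfolding raftK1_V_def by (simp add: card_image card_raft_V finite_raft_V)

lemma raftK1_0_iso_P3: "graph_iso (raftK1_V 0) (raftK1_E 0) P3_V P3_E"
proof -
  have V: "raftK1_V 0 = {None, Some (False, 0), Some (True, 0)}"
    unfolding raftK1_V_def raft_V_def by auto
  define \<phi> :: "(bool \<times> nat) option \<Rightarrow> nat" where
    "\<phi> q = (if q = None then 1 else if q = Some (False, 0) then 0 else 2)" for q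
  show ?thesis
  proof (rule graph_iso_by_card[of \<phi>])
    show "inj_on \<phi> (raftK1_V 0)" "\<phi> ` raftK1_V 0 \<subseteq> P3_V" "card P3_V \<le> card (raftK1_V 0)"
      unfolding V P3_V_def \<phi>_def by auto
    show "raftK1_E 0 u v \<longleftrightarrow> P3_E (\<phi> u) (\<phi> v)" if "u \<in> raftK1_V 0" "v \<in> raftK1_V 0" for u v
      using that unfolding V by (auto simp: \<phi>_def raftK1_E_def raft_E_def P3_E_iff V raft_V_def)
  qed (simp add: P3_V_def)
qed

text \<open>If some \<open>y\<close> has rank \<open>s\<close> this is the raft \<open>R (s - 1)\<close>; otherwise the vertex of rank
  \<open>s - 1\<close> in \<open>X\<close> is universal and the rest is \<open>R (s - 2)\<close>.\<close>

locale ranked_cobipartite =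
  fixes V :: "'v set" and E :: "'v \<Rightarrow> 'v \<Rightarrow> bool" and X Y :: "'v set"
    and i k :: "'v \<Rightarrow> nat" and s :: nat
  assumes graph: "graph V E" and partition: "V = X \<union> Y" "X \<inter> Y = {}"
    and clique_X: "\<And>x x'. x \<in> X \<Longrightarrow> x' \<in> X \<Longrightarrow> x \<noteq> x' \<Longrightarrow> E x x'"
    and clique_Y: "\<And>y y'. y \<in> Y \<Longrightarrow> y' \<in> Y \<Longrightarrow> y \<noteq> y' \<Longrightarrow> E y y'"
    and rank_X: "bij_betw i X {..<s}"
    and inj_k: "inj_on k Y" and k_range: "k ` Y \<subseteq> {1..s}" "{1..<s} \<subseteq> k ` Y"
    and cross_adj: "\<And>x y. x \<in> X \<Longrightarrow> y \<in> Y \<Longrightarrow> E x y \<longleftrightarrow> k y \<le> i x"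
    and s_ge_2: "s \<ge> 2"
begin

lemma adj_iff:
  assumes "u \<in> V" "v \<in> V"
  shows "E u v \<longleftrightarrow> u \<noteq> v \<and> ((u \<in> X \<longleftrightarrow> v \<in> X)
    \<or> (u \<in> X \<and> v \<in> Y \<and> k v \<le> i u) \<or> (u \<in> Y \<and> v \<in> X \<and> k u \<le> i v))"
proof -
  have sym: "E u v \<longleftrightarrow> E v u" and irrefl: "\<not> E u u"
    using graph unfolding graph_def by blast+
  consider "u \<in> X" "v \<in> X" | "u \<in> Y" "v \<in> Y" | "u \<in> X" "v \<in> Y" | "u \<in> Y" "v \<in> X"
    using assms partition by blast
  then show ?thesis
  proof cases
    case 1 then show ?thesis using clique_X irrefl by auto
  next
    case 2 then show ?thesis using clique_Y irrefl partition by auto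
  next
    case 3 then show ?thesis using cross_adj partition by auto
  next
    case 4 then show ?thesis using cross_adj[of v u] sym partition by auto
  qed
qed

lemma card_X: "card X = s"
  using bij_betw_same_card[OF rank_X] by simp

lemma finite_X: "finite X"
  using card_X s_ge_2 by (intro card_ge_0_finite) simp

lemma card_Y: "card Y = card (k ` Y)"
  using inj_k by (simp add: card_image)

lemma card_V: "card V = card X + card Y"
  using graph partition card_Un_disjoint[of X Y] unfolding graph_def by auto

lemma i_less: "x \<in> X \<Longrightarrow> i x < s"
  using bij_betwE[OF rank_X] by blast

lemma k_bounds: "y \<in> Y \<Longrightarrow> 1 \<le> k y \<and> k y \<le> s"
  using k_range(1) by auto

lemma k_image_cases: "k ` Y = {1..s} \<and> s \<in> k ` Y \<or> k ` Y = {1..<s} \<and> s \<notin> k ` Y"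
proof (cases "s \<in> k ` Y")
  case True
  have "{1..s} = insert s {1..<s}" using s_ge_2 by auto
  then show ?thesis using True k_range by auto
next
  case False
  have "{1..s} - {s} = {1..<s}" by auto
  then show ?thesis using False k_range by blast
qed

definition raft_coord :: "nat \<Rightarrow> 'v \<Rightarrow> bool \<times> nat" where
  "raft_coord t v = (if v \<in> X then (False, i v) else (True, t - k v))"

definition fits :: "nat \<Rightarrow> 'v \<Rightarrow> bool" where
  "fits t v \<longleftrightarrow> v \<in> V \<and> (v \<in> X \<longrightarrow> i v < t) \<and> (v \<in> Y \<longrightarrow> k v \<le> t)"

lemma raft_coord_inj:
  assumes "fits t u" "fits t v" "raft_coord t u = raft_coord t v"
  shows "u = v"
proof (cases "u \<in> X")
  case True
  then have "v \<in> X" "i u = i v" using assms(3) unfolding raft_coord_def by (auto split: if_splits)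
  then show ?thesis using True bij_betw_imp_inj_on[OF rank_X] by (auto dest: inj_onD)
next
  case False
  then have "u \<in> Y" "v \<in> Y" "t - k u = t - k v"
    using assms partition unfolding raft_coord_def fits_def by (auto split: if_splits)
  moreover have "k u = k v"
    using calculation assms(1,2) unfolding fits_def by linarith
  ultimately show ?thesis using inj_k by (auto dest: inj_onD)
qed

lemma raft_coord_in_raft_V: "fits t v \<Longrightarrow> raft_coord t v \<in> raft_V (t - 1)"
  using k_bounds[of v] partition unfolding fits_def raft_coord_def raft_V_def by auto

lemma raft_E_raft_coord:
  assumes "fits t u" "fits t v"
  shows "raft_E (t - 1) (raft_coord t u) (raft_coord t v) \<longleftrightarrow> E u v"
proof -
  have uv: "u \<in> V" "v \<in> V" using assms unfolding fits_def by blast+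
  have "raft_coord t u = raft_coord t v \<longleftrightarrow> u = v" using raft_coord_inj assms by blast
  moreover have "fst (raft_coord t u) = fst (raft_coord t v) \<longleftrightarrow> (u \<in> X \<longleftrightarrow> v \<in> X)"
    by (simp add: raft_coord_def)
  moreover have "t - 1 + 1 \<le> snd (raft_coord t u) + snd (raft_coord t v) \<longleftrightarrow>
      (u \<in> X \<and> v \<in> Y \<and> k v \<le> i u) \<or> (u \<in> Y \<and> v \<in> X \<and> k u \<le> i v)"
    if "(u \<in> X) \<noteq> (v \<in> X)"
    using that assms partition k_bounds[of u] k_bounds[of v]
    unfolding fits_def raft_coord_def by auto
  ultimately show ?thesis
    using raft_coord_in_raft_V[OF assms(1)] raft_coord_in_raft_V[OF assms(2)]
    unfolding raft_E_def adj_iff[OF uv] by blast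
qed

lemma graph_iso_raft:
  assumes "s \<in> k ` Y"
  shows "graph_iso V E (raft_V (s - 1)) (raft_E (s - 1))"
proof -
  have fits: "fits s v" if "v \<in> V" for v
    using that i_less k_bounds unfolding fits_def by blast
  show ?thesis
  proof (rule graph_iso_by_card[of "raft_coord s"])
    show "inj_on (raft_coord s) V" using raft_coord_inj fits by (blast intro: inj_onI)
    show "raft_coord s ` V \<subseteq> raft_V (s - 1)" using raft_coord_in_raft_V fits by blast
    have "card Y = s" using card_Y k_image_cases assms by auto
    then show "card (raft_V (s - 1)) \<le> card V"
      using card_V card_X s_ge_2 by (simp add: card_raft_V)
    show "E u v \<longleftrightarrow> raft_E (s - 1) (raft_coord s u) (raft_coord s v)" if "u \<in> V" "v \<in> V" for u v
      using raft_E_raft_coord fits that by blast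
  qed (simp add: raft_V_def)
qed

lemma k_less:
  assumes "s \<notin> k ` Y" "y \<in> Y"
  shows "k y < s"
proof -
  have "k y \<noteq> s" using assms by (metis imageI)
  then show ?thesis using k_bounds[OF assms(2)] by linarith
qed

lemma top_universal:
  assumes "s \<notin> k ` Y" "x \<in> X" "i x = s - 1" "v \<in> V" "x \<noteq> v"
  shows "E x v"
  using assms adj_iff[of x v] partition k_less[of v] by auto

lemma graph_iso_raftK1:
  assumes "s \<notin> k ` Y"
  shows "graph_iso V E (raftK1_V (s - 2)) (raftK1_E (s - 2))"
proof -
  define \<phi> where "\<phi> v = (if v \<in> X \<and> i v = s - 1 then None else Some (raft_coord (s - 1) v))" for v
  have fits: "fits (s - 1) v" if "v \<in> V" "\<phi> v \<noteq> None" for v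
    using that i_less[of v] k_less[OF assms, of v] partition unfolding fits_def \<phi>_def
    by (auto split: if_splits)
  have top: "\<phi> v = None \<longleftrightarrow> v \<in> X \<and> i v = s - 1" for v by (simp add: \<phi>_def)
  have inj: "inj_on \<phi> V"
  proof (rule inj_onI)
    fix u v assume uv: "u \<in> V" "v \<in> V" "\<phi> u = \<phi> v"
    show "u = v"
    proof (cases "\<phi> u = None")
      case True
      then have "u \<in> X" "v \<in> X" "i u = i v" using uv(3) top[of u] top[of v] by auto
      then show ?thesis using bij_betw_imp_inj_on[OF rank_X] by (auto dest: inj_onD)
    next
      case False
      moreover have "\<phi> v \<noteq> None" using False uv(3) by simp
      moreover have "raft_coord (s - 1) u = raft_coord (s - 1) v"
        using calculation uv(3) unfolding \<phi>_def by (auto split: if_splits)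
      ultimately show ?thesis using raft_coord_inj fits uv(1,2) by blast
    qed
  qed
  have img: "\<phi> ` V \<subseteq> raftK1_V (s - 2)"
    using raft_coord_in_raft_V[OF fits] s_ge_2 unfolding raftK1_V_def \<phi>_def
    by (auto simp: numeral_2_eq_2)
  show ?thesis
  proof (rule graph_iso_by_card[OF inj img])
    have "card Y = s - 1" using card_Y k_image_cases assms by auto
    then show "card (raftK1_V (s - 2)) \<le> card V"
      using card_V card_X s_ge_2 by (simp add: card_raftK1_V)
    show "E u v \<longleftrightarrow> raftK1_E (s - 2) (\<phi> u) (\<phi> v)" if uv: "u \<in> V" "v \<in> V" for u v
    proof (cases "u = v")
      case True
      then show ?thesis using adj_iff[OF uv] unfolding raftK1_E_def by simp
    next
      case False
      then have ne: "\<phi> u \<noteq> \<phi> v" and mem: "\<phi> u \<in> raftK1_V (s - 2)" "\<phi> v \<in> raftK1_V (s - 2)"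
        using inj img uv by (auto dest: inj_onD)
      show ?thesis
      proof (cases "\<phi> u = None \<or> \<phi> v = None")
        case True
        then have "E u v"
          using top top_universal[OF assms] uv False adj_iff[OF uv] adj_iff[OF uv(2,1)] by blast
        then show ?thesis using True ne mem unfolding raftK1_E_def by auto
      next
        case False
        then have "\<phi> u = Some (raft_coord (s - 1) u)" "\<phi> v = Some (raft_coord (s - 1) v)"
          unfolding \<phi>_def by (auto split: if_splits)
        moreover have "s - 2 = s - 1 - 1" by simp
        ultimately show ?thesis
          using raft_E_raft_coord[of "s - 1" u v] fits uv False ne mem unfolding raftK1_E_def by auto
      qed
    qed
  qed (simp add: raftK1_V_def finite_raft_V)
qed

lemma induced_P4:
  assumes "2 \<in> k ` Y"
  obtains a0 a1 a2 a3 where "induced_P4 V E a0 a1 a2 a3"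
proof -
  have "0 \<in> i ` X" "1 \<in> i ` X" using rank_X s_ge_2 unfolding bij_betw_def by simp_all
  then obtain x0 x1 where x: "x0 \<in> X" "i x0 = 0" "x1 \<in> X" "i x1 = 1"
    by (metis imageE)
  have "1 \<in> k ` Y" using k_range(2) s_ge_2 by auto
  then obtain y1 y2 where y: "y1 \<in> Y" "k y1 = 1" "y2 \<in> Y" "k y2 = 2"
    using assms by (metis imageE)
  have "x0 \<noteq> x1" "y1 \<noteq> y2" using x y by auto
  then have "induced_P4 V E x0 x1 y1 y2"
    unfolding induced_P4_def using x y partition clique_X clique_Y cross_adj[of x0 y1]
      cross_adj[of x0 y2] cross_adj[of x1 y1] cross_adj[of x1 y2] by auto
  then show ?thesis by (rule that)
qed

lemma isomorphic_to_raft: "isomorphic_to_raft V E"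
proof (cases "s \<in> k ` Y")
  case True
  then show ?thesis unfolding isomorphic_to_raft_def
    using graph_iso_raft s_ge_2 by (intro disjI1 exI[of _ "s - 1"]) auto
next
  case False
  then show ?thesis unfolding isomorphic_to_raft_def using graph_iso_raftK1 by blast
qed

lemma P3_or_induced_P4:
  "graph_iso V E P3_V P3_E \<or> (\<exists>a0 a1 a2 a3. induced_P4 V E a0 a1 a2 a3)"
proof (cases "s = 2 \<and> s \<notin> k ` Y")
  case True
  then have "graph_iso V E (raftK1_V 0) (raftK1_E 0)" using graph_iso_raftK1 by fastforce
  then show ?thesis using graph_iso_trans raftK1_0_iso_P3 by blast
next
  case False
  have "2 \<in> k ` Y"
  proof (cases "s = 2")
    case True
    then show ?thesis using False by simp
  next
    case False
    then have "2 \<in> {1..<s}" using s_ge_2 by simp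
    then show ?thesis using k_range(2) by blast
  qed
  then show ?thesis using induced_P4 by metis
qed

end

locale twin_free_two_clique_graph = claw_C4_bull_P5_C5_free_graph +
  fixes X Y :: "'a set" and p :: 'a
  assumes twin_free: "\<not> has_true_twins V E"
    and partition: "V = X \<union> Y" "X \<inter> Y = {}" and Y_nonempty: "Y \<noteq> {}"
    and p_in_X: "p \<in> X" and p_no_nbr_Y: "\<And>y. y \<in> Y \<Longrightarrow> \<not> E p y"
    and clique_X: "\<And>x x'. x \<in> X \<Longrightarrow> x' \<in> X \<Longrightarrow> x \<noteq> x' \<Longrightarrow> E x x'"
    and clique_Y: "\<And>y y'. y \<in> Y \<Longrightarrow> y' \<in> Y \<Longrightarrow> y \<noteq> y' \<Longrightarrow> E y y'"
begin

definition nbrs_Y :: "'a \<Rightarrow> 'a set" where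
  "nbrs_Y x = {y \<in> Y. E x y}"

definition rank_X :: "'a \<Rightarrow> nat" where
  "rank_X x = card {x' \<in> X. nbrs_Y x' \<subset> nbrs_Y x}"

definition rank_Y :: "'a \<Rightarrow> nat" where
  "rank_Y y = card {x \<in> X. \<not> E x y}"

lemma finite_X: "finite X"
  using finite_V partition by simp

lemma nbrs_Y_nested:
  assumes "x \<in> X" "x' \<in> X"
  shows "nbrs_Y x \<subseteq> nbrs_Y x' \<or> nbrs_Y x' \<subseteq> nbrs_Y x"
proof (rule ccontr)
  assume "\<not> ?thesis"
  then obtain y y' where y: "y \<in> Y" "E x y" "\<not> E x' y" "y' \<in> Y" "E x' y'" "\<not> E x y'"
    unfolding nbrs_Y_def by blast
  then have "x \<noteq> x'" "y \<noteq> y'" using assms by auto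
  then have "induced_C4 V E x y y' x'"
    using assms y partition clique_X clique_Y adj_commute unfolding induced_C4_def by auto
  then show False using no_C4 by blast
qed

lemma nbrs_Y_inj:
  assumes "x \<in> X" "x' \<in> X" "nbrs_Y x = nbrs_Y x'"
  shows "x = x'"
proof -
  have "w = x \<or> E x w \<longleftrightarrow> w = x' \<or> E x' w" if "w \<in> V" for w
    using that assms partition clique_X unfolding nbrs_Y_def by blast
  then have "closed_nbhd V E x = closed_nbhd V E x'" unfolding closed_nbhd_def by blast
  then show ?thesis using twin_free assms partition unfolding has_true_twins_def by blast
qed

lemma adj_iff_rank:
  assumes x: "x \<in> X" and y: "y \<in> Y"
  shows "E x y \<longleftrightarrow> rank_Y y \<le> rank_X x"
proof
  assume "E x y"
  then have "{x' \<in> X. \<not> E x' y} \<subseteq> {x' \<in> X. nbrs_Y x' \<subset> nbrs_Y x}"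
    using nbrs_Y_nested[OF x] y unfolding nbrs_Y_def by blast
  then show "rank_Y y \<le> rank_X x"
    unfolding rank_Y_def rank_X_def using finite_X by (intro card_mono) auto
next
  assume le: "rank_Y y \<le> rank_X x"
  show "E x y"
  proof (rule ccontr)
    assume "\<not> E x y"
    then have "{x' \<in> X. nbrs_Y x' \<subset> nbrs_Y x} \<subseteq> {x' \<in> X. \<not> E x' y} - {x}"
      using y unfolding nbrs_Y_def by blast
    then have "rank_X x \<le> card ({x' \<in> X. \<not> E x' y} - {x})"
      unfolding rank_X_def using finite_X by (intro card_mono) auto
    also have "\<dots> < rank_Y y"
      unfolding rank_Y_def using finite_X x \<open>\<not> E x y\<close> by (intro psubset_card_mono) auto
    finally show False using le by simp
  qed
qed

lemma rank_X_less:
  assumes "x \<in> X" "nbrs_Y x \<subset> nbrs_Y x'"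
  shows "rank_X x < rank_X x'"
proof -
  have "insert x {z \<in> X. nbrs_Y z \<subset> nbrs_Y x} \<subseteq> {z \<in> X. nbrs_Y z \<subset> nbrs_Y x'}"
    using assms by auto
  then have "card (insert x {z \<in> X. nbrs_Y z \<subset> nbrs_Y x}) \<le> rank_X x'"
    unfolding rank_X_def using finite_X by (intro card_mono) auto
  then show ?thesis unfolding rank_X_def using finite_X by simp
qed

lemma nbrs_Y_psubset:
  assumes "x \<in> X" "x' \<in> X" "x \<noteq> x'"
  shows "nbrs_Y x \<subset> nbrs_Y x' \<or> nbrs_Y x' \<subset> nbrs_Y x"
  using nbrs_Y_nested[OF assms(1,2)] nbrs_Y_inj[OF assms(1,2)] assms(3) by blast

lemma bij_rank_X: "bij_betw rank_X X {..<card X}"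
proof -
  have inj: "inj_on rank_X X"
  proof (rule inj_onI, rule ccontr)
    fix x x' assume "x \<in> X" "x' \<in> X" "rank_X x = rank_X x'" "x \<noteq> x'"
    then show False using nbrs_Y_psubset[of x x'] rank_X_less[of x x'] rank_X_less[of x' x] by auto
  qed
  have "rank_X x < card X" if "x \<in> X" for x
    unfolding rank_X_def using finite_X that by (intro psubset_card_mono) auto
  then have "rank_X ` X \<subseteq> {..<card X}" by auto
  moreover have "card (rank_X ` X) = card {..<card X}" using card_image[OF inj] by simp
  ultimately have "rank_X ` X = {..<card X}" by (intro card_subset_eq) auto
  then show ?thesis using inj unfolding bij_betw_def by blast
qed

lemma inj_rank_Y: "inj_on rank_Y Y"
proof (rule inj_onI)
  fix y y' assume yy: "y \<in> Y" "y' \<in> Y" "rank_Y y = rank_Y y'"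
  have "w = y \<or> E y w \<longleftrightarrow> w = y' \<or> E y' w" if "w \<in> V" for w
  proof (cases "w \<in> Y")
    case True
    then show ?thesis using clique_Y yy by blast
  next
    case False
    then have "w \<in> X" using that partition by blast
    then show ?thesis
      using adj_iff_rank[of w y] adj_iff_rank[of w y'] yy False adj_commute by auto
  qed
  then have "closed_nbhd V E y = closed_nbhd V E y'" unfolding closed_nbhd_def by blast
  then show "y = y'" using twin_free yy partition unfolding has_true_twins_def by blast
qed

lemma rank_Y_range: "rank_Y ` Y \<subseteq> {1..card X}"
proof (rule image_subsetI)
  fix y assume "y \<in> Y"
  then have "p \<in> {x \<in> X. \<not> E x y}" using p_in_X p_no_nbr_Y by blast
  then have "0 < rank_Y y" unfolding rank_Y_def
    by (auto simp: card_gt_0_iff intro: finite_subset[OF _ finite_X])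
  moreover have "rank_Y y \<le> card X" unfolding rank_Y_def using finite_X by (intro card_mono) auto
  ultimately show "rank_Y y \<in> {1..card X}" by simp
qed

text \<open>Consecutive ranks in \<open>X\<close> differ by a vertex of \<open>Y\<close>, whose rank is the larger one.\<close>

lemma rank_Y_onto: "{1..<card X} \<subseteq> rank_Y ` Y"
proof
  fix j assume j: "j \<in> {1..<card X}"
  have img: "rank_X ` X = {..<card X}" using bij_rank_X by (simp add: bij_betw_def)
  obtain x where x: "x \<in> X" "rank_X x = j"
    using j img by (metis atLeastLessThan_iff imageE lessThan_iff)
  obtain x' where x': "x' \<in> X" "rank_X x' = j - 1"
    using j img by (metis atLeastLessThan_iff imageE lessThan_iff less_imp_diff_less)
  have "\<not> nbrs_Y x \<subset> nbrs_Y x'"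
  proof
    assume "nbrs_Y x \<subset> nbrs_Y x'"
    then have "rank_X x < rank_X x'" by (rule rank_X_less[OF x(1)])
    then show False using x x' by linarith
  qed
  moreover have "x \<noteq> x'" using x x' j by auto
  ultimately have "nbrs_Y x' \<subset> nbrs_Y x" using nbrs_Y_psubset[OF x(1) x'(1)] by blast
  then obtain y where y: "y \<in> Y" "E x y" "\<not> E x' y" unfolding nbrs_Y_def by blast
  then have "rank_Y y = j"
    using adj_iff_rank[OF x(1) y(1)] adj_iff_rank[OF x'(1) y(1)] x x' j by auto
  then show "j \<in> rank_Y ` Y" using y by blast
qed

lemma card_X_ge_2: "card X \<ge> 2"
proof (rule ccontr)
  assume "\<not> card X \<ge> 2"
  then have "card X \<le> Suc 0" by simp
  then have "X = {p}" using p_in_X card_le_Suc0_iff_eq[OF finite_X] by blast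
  then have no_nbr: "\<not> E p w" for w using p_no_nbr_Y adj_in_V partition irrefl by blast
  obtain y where "y \<in> Y" using Y_nonempty by blast
  then have "E\<^sup>*\<^sup>* p y" "p \<noteq> y"
    using connected p_in_X partition unfolding connected_graph_def by blast+
  then show False by (cases rule: converse_rtranclpE) (auto simp: no_nbr)
qed

lemma ranked_cobipartite: "ranked_cobipartite V E X Y rank_X rank_Y (card X)"
  by unfold_locales (use graph partition clique_X clique_Y bij_rank_X inj_rank_Y rank_Y_range
      rank_Y_onto adj_iff_rank card_X_ge_2 in auto)

end

lemma (in claw_C4_bull_P5_C5_free_graph) raft_structure:
  assumes "\<not> has_true_twins V E" and "card V \<ge> 2"
  shows "isomorphic_to_raft V E"
    and "graph_iso V E P3_V P3_E \<or> (\<exists>a0 a1 a2 a3. induced_P4 V E a0 a1 a2 a3)"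
proof -
  obtain X Y p where "V = X \<union> Y" "X \<inter> Y = {}" "Y \<noteq> {}" "p \<in> X" "\<And>y. y \<in> Y \<Longrightarrow> \<not> E p y"
    "\<And>x x'. x \<in> X \<Longrightarrow> x' \<in> X \<Longrightarrow> x \<noteq> x' \<Longrightarrow> E x x'"
    "\<And>y y'. y \<in> Y \<Longrightarrow> y' \<in> Y \<Longrightarrow> y \<noteq> y' \<Longrightarrow> E y y'"
    using two_clique_partition[OF assms] by blast
  then interpret twin_free_two_clique_graph V E X Y p
    using assms(1) by unfold_locales blast+
  interpret ranked_cobipartite V E X Y rank_X rank_Y "card X" by (rule ranked_cobipartite)
  show "isomorphic_to_raft V E" by (rule isomorphic_to_raft)
  show "graph_iso V E P3_V P3_E \<or> (\<exists>a0 a1 a2 a3. induced_P4 V E a0 a1 a2 a3)"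
    by (rule P3_or_induced_P4)
qed

lemma one_perfectly_orientable_P3_strong_prod_raft:
  assumes "graph_iso VG EG P3_V P3_E" and "isomorphic_to_raft VH EH"
  shows "one_perfectly_orientable (strong_prod_E VG EG VH EH)"
  using assms(2) unfolding isomorphic_to_raft_def
proof (elim disjE exE conjE)
  fix n assume "graph_iso VH EH (raft_V n) (raft_E n)"
  then show ?thesis
    by (rule one_perfectly_orientable_strong_prod_iso[OF one_perfectly_orientable_P3_raft assms(1)])
next
  fix n assume "graph_iso VH EH (raftK1_V n) (raftK1_E n)"
  then show ?thesis
    by (rule one_perfectly_orientable_strong_prod_iso[OF one_perfectly_orientable_P3_raftK1 assms(1)])
qed

lemma not_one_perfectly_orientable_P4_P4:
  assumes "graph VG EG" "graph VH EH"
    and "induced_P4 VG EG a0 a1 a2 a3" "induced_P4 VH EH b0 b1 b2 b3"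
  shows "\<not> one_perfectly_orientable (strong_prod_E VG EG VH EH)"
proof
  assume "one_perfectly_orientable (strong_prod_E VG EG VH EH)"
  then obtain D where "one_perfect_orientation (strong_prod_E VG EG VH EH) D"
    unfolding one_perfectly_orientable_def by blast
  then interpret one_perfectly_oriented_strong_prod VG EG VH EH D
    using assms(1,2) by unfold_locales
  show False by (rule no_P4_P4[OF assms(3,4)])
qed

lemma raft_structure_if_one_perfectly_orientable:
  assumes "graph VG EG" "connected_graph VG EG" "card VG \<ge> 2" "\<not> has_true_twins VG EG"
    and "graph VH EH" "connected_graph VH EH" "card VH \<ge> 2" "\<not> has_true_twins VH EH"
    and "one_perfectly_orientable (strong_prod_E VG EG VH EH)"
  shows "isomorphic_to_raft VH EH"
    and "graph_iso VH EH P3_V P3_E \<or> (\<exists>b0 b1 b2 b3. induced_P4 VH EH b0 b1 b2 b3)"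
proof -
  obtain D where "one_perfect_orientation (strong_prod_E VG EG VH EH) D"
    using assms(9) unfolding one_perfectly_orientable_def by blast
  then interpret one_perfectly_oriented_strong_prod VG EG VH EH D
    using assms(1,5) by unfold_locales
  interpret G: connected_finite_graph VG EG using assms(1,2) by unfold_locales
  obtain a0 a1 a2 where "induced_P3 VG EG a0 a1 a2"
    using G.induced_P3_if_twin_free assms(3,4) by blast
  then have "claw_C4_bull_P5_C5_free VH EH" by (rule claw_C4_bull_P5_C5_free_if_induced_P3)
  then interpret H: claw_C4_bull_P5_C5_free_graph VH EH
    using assms(5,6) by unfold_locales
  show "isomorphic_to_raft VH EH"
    and "graph_iso VH EH P3_V P3_E \<or> (\<exists>b0 b1 b2 b3. induced_P4 VH EH b0 b1 b2 b3)"
    using H.raft_structure assms(7,8) by blast+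
qed

theorem lemma21:
  fixes VG :: "'a set" and EG :: "'a \<Rightarrow> 'a \<Rightarrow> bool"
    and VH :: "'b set" and EH :: "'b \<Rightarrow> 'b \<Rightarrow> bool"
  assumes "graph VG EG" and "graph VH EH"
    and "connected_graph VG EG" and "connected_graph VH EH"
    and "card VG \<ge> 2" and "card VH \<ge> 2"
    and "\<not> has_true_twins VG EG" and "\<not> has_true_twins VH EH"
  shows "one_perfectly_orientable (strong_prod_E VG EG VH EH) \<longleftrightarrow>
    ((graph_iso VG EG P3_V P3_E \<and>
       ((\<exists>n\<ge>1. graph_iso VH EH (raft_V n) (raft_E n)) \<or>
        (\<exists>n. graph_iso VH EH (raftK1_V n) (raftK1_E n)))) \<or>
     (graph_iso VH EH P3_V P3_E \<and>
       ((\<exists>n\<ge>1. graph_iso VG EG (raft_V n) (raft_E n)) \<or>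
        (\<exists>n. graph_iso VG EG (raftK1_V n) (raftK1_E n)))))"
  unfolding isomorphic_to_raft_def[symmetric]
proof
  assume opo: "one_perfectly_orientable (strong_prod_E VG EG VH EH)"
  then have opo': "one_perfectly_orientable (strong_prod_E VH EH VG EG)"
    by (rule one_perfectly_orientable_strong_prod_swap)
  note H = raft_structure_if_one_perfectly_orientable[OF assms(1,3,5,7) assms(2,4,6,8) opo]
  note G = raft_structure_if_one_perfectly_orientable[OF assms(2,4,6,8) assms(1,3,5,7) opo']
  show "graph_iso VG EG P3_V P3_E \<and> isomorphic_to_raft VH EH
      \<or> graph_iso VH EH P3_V P3_E \<and> isomorphic_to_raft VG EG"
    using G H not_one_perfectly_orientable_P4_P4[OF assms(1,2)] opo by blast
next
  assume "graph_iso VG EG P3_V P3_E \<and> isomorphic_to_raft VH EH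
      \<or> graph_iso VH EH P3_V P3_E \<and> isomorphic_to_raft VG EG"
  then show "one_perfectly_orientable (strong_prod_E VG EG VH EH)"
  proof
    assume "graph_iso VG EG P3_V P3_E \<and> isomorphic_to_raft VH EH"
    then show ?thesis by (intro one_perfectly_orientable_P3_strong_prod_raft) blast+
  next
    assume "graph_iso VH EH P3_V P3_E \<and> isomorphic_to_raft VG EG"
    then have "one_perfectly_orientable (strong_prod_E VH EH VG EG)"
      by (intro one_perfectly_orientable_P3_strong_prod_raft) blast+
    then show ?thesis by (rule one_perfectly_orientable_strong_prod_swap)
  qed
qed

end
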